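(* Let $w\in S_\infty$ and $i\ge1$. There is an involution $\tau_i:\mathcal P(w)\to\mathcal P(w)$ such that for every $D\in\mathcal P(w)$: (1) $\tau_i(D)$ coincides with $D$ in all rows with index different from $i$ and $i+1$; (2) $\mathrm{start}_i(\tau_i(D))=\mathrm{start}_i(D)$, and $\tau_i(D)$ coincides with $D$ in all columns with index strictly less than $\mathrm{start}_i(D)$; (3) $l^i_i(\tau_i(D))=l^i_{i+1}(D)$.
   Context: Permutations: $S_\infty=\bigcup_n S_n$ is generated by the simple transpositions $s_a=(a\ a{+}1)$, $a\ge 1$; $l(w)$ is the Coxeter length of $w$. A pipe dream is a finite subset $D\subset\mathbb{Z}_{>0}\times\mathbb{Z}_{>0}$; its elements $(r,c)$ are called crosses (in row $r$, column $c$). The reading word of $D$ is obtained by listing the crosses row by row from top to bottom, within each row from right to left (decreasing $c$), and recording for each cross $(r,c)$ its antidiagonal index $r+c-1$; this gives a word $(a_1,\dots,a_k)$. For $u\in S_\infty$ put $u\star s_a=us_a$ if $l(us_a)=l(u)+1$ and $u\star s_a=u$ otherwise. The Demazure product of $D$ is $\delta(D)=(\cdots((e\star s_{a_1})\star s_{a_2})\cdots)\star s_{a_k}$. For $w\in S_\infty$, $\mathcal P(w)=\{D:\delta(D)=w\}$. For a pipe dream $D$ and row index $i$, $\mathrm{start}_i(D)=\min\{c\ge1:(i,c)\notin D\}$, and for $r\in\{i,i+1\}$, $l^i_r(D)$ denotes the number of crosses $(r,c)\in D$ with $c\ge \mathrm{start}_i(D)$. *)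

theory Defs
  imports Main
begin

text \<open>Permutations of S_infinity: bijections of nat with finite support, fixing 0
 (so they are permutations of the positive integers).\<close>
definition S_inf :: "(nat \<Rightarrow> nat) \<Rightarrow> bool" where
  "S_inf w \<longleftrightarrow> bij w \<and> finite {x. w x \<noteq> x} \<and> w 0 = 0"

definition s :: "nat \<Rightarrow> nat \<Rightarrow> nat" where
  "s a = (\<lambda>x. if x = a then Suc a else if x = Suc a then a else x)"

definition len :: "(nat \<Rightarrow> nat) \<Rightarrow> nat" where
  "len w = card {(i, j). 0 < i \<and> i < j \<and> w j < w i}"

definition dstar :: "(nat \<Rightarrow> nat) \<Rightarrow> nat \<Rightarrow> (nat \<Rightarrow> nat)" where
  "dstar u a = (if len (u \<circ> s a) = len u + 1 then u \<circ> s a else u)"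

definition pipe_dream :: "(nat \<times> nat) set \<Rightarrow> bool" where
  "pipe_dream D \<longleftrightarrow> finite D \<and> (\<forall>(r, c) \<in> D. 0 < r \<and> 0 < c)"

definition reading_word :: "(nat \<times> nat) set \<Rightarrow> nat list" where
  "reading_word D = concat (map (\<lambda>r. map (\<lambda>c. r + c - 1)
       (rev (sorted_list_of_set {c. (r, c) \<in> D})))
     [1..<Suc (Max (insert 0 (fst ` D)))])"

definition demazure :: "(nat \<times> nat) set \<Rightarrow> (nat \<Rightarrow> nat)" where
  "demazure D = foldl dstar id (reading_word D)"

definition PD :: "(nat \<Rightarrow> nat) \<Rightarrow> (nat \<times> nat) set set" where
  "PD w = {D. pipe_dream D \<and> demazure D = w}"

definition start :: "nat \<Rightarrow> (nat \<times> nat) set \<Rightarrow> nat" where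
  "start i D = (LEAST c. 1 \<le> c \<and> (i, c) \<notin> D)"

definition lcount :: "nat \<Rightarrow> nat \<Rightarrow> (nat \<times> nat) set \<Rightarrow> nat" where
  "lcount i r D = card {c. (r, c) \<in> D \<and> start i D \<le> c}"

end

theory Submission
  imports Defs Complex_Main
begin

text \<open>
  In the reading word of a pipe dream \<open>D\<close>, the crosses of rows \<open>i\<close> and \<open>i + 1\<close> weakly right
  of \<open>start i D\<close> contribute two decreasing runs of letters \<open>A\<close> and \<open>B\<close>; the letters of row
  \<open>i\<close> between them are smaller by at least two than those of \<open>B\<close> and commute past them.
  Hence, with the rest of \<open>D\<close> frozen, the Demazure product is \<open>\<Phi> (\<pi>\<^sub>B (\<pi>\<^sub>A u))\<close> for the
  0-Hecke operators \<open>\<pi>\<close>.  In the 0-Hecke algebra the row products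
  \<open>(1 + x \<pi>\<^sub>n) \<cdots> (1 + x \<pi>\<^sub>m)\<close> for different \<open>x\<close> commute (Yang--Baxter), so the generating
  function \<open>\<Sum> x\<^bsup>|A|\<^esup> y\<^bsup>|B|\<^esup>\<close> over the pipe dreams of \<open>w\<close> with a given frozen part is
  symmetric in \<open>x\<close> and \<open>y\<close>.  Comparing coefficients, the pipe dreams with
  \<open>(l\<^sup>i\<^sub>i, l\<^sup>i\<^sub>i\<^sub>+\<^sub>1) = (a, b)\<close> and those with \<open>(b, a)\<close> are equinumerous, and bijections
  between them form the involution.
\<close>

section \<open>The 0-Hecke action and the Demazure product\<close>

definition hecke :: "nat \<Rightarrow> (nat \<Rightarrow> nat) \<Rightarrow> (nat \<Rightarrow> nat)" where
  "hecke a u = (if u a < u (Suc a) then u \<circ> s a else u)"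

lemma hecke_eq_sort:
  "hecke a u = (\<lambda>j. if j = a then max (u a) (u (Suc a))
     else if j = Suc a then min (u a) (u (Suc a)) else u j)"
  by (auto simp: hecke_def s_def fun_eq_iff max_def min_def)

lemma hecke_idem: "hecke a (hecke a u) = hecke a u"
  by (auto simp: hecke_eq_sort fun_eq_iff max_def min_def)

lemma hecke_commute:
  "Suc (Suc a) \<le> b \<or> Suc (Suc b) \<le> a \<Longrightarrow> hecke a (hecke b u) = hecke b (hecke a u)"
  by (auto simp: hecke_eq_sort fun_eq_iff)

lemma hecke_braid: "hecke (Suc a) (hecke a (hecke (Suc a) u)) = hecke a (hecke (Suc a) (hecke a u))"
  by (auto simp: hecke_eq_sort fun_eq_iff max_def min_def)

definition hecke_word :: "nat list \<Rightarrow> (nat \<Rightarrow> nat) \<Rightarrow> (nat \<Rightarrow> nat)" where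
  "hecke_word ws u = foldl (\<lambda>u a. hecke a u) u ws"

lemma hecke_word_Nil [simp]: "hecke_word [] u = u"
  by (simp add: hecke_word_def)

lemma hecke_word_Cons [simp]: "hecke_word (a # ws) u = hecke_word ws (hecke a u)"
  by (simp add: hecke_word_def)

lemma hecke_word_append: "hecke_word (ws @ vs) u = hecke_word vs (hecke_word ws u)"
  by (simp add: hecke_word_def)

lemma hecke_word_commute_letter:
  assumes "\<forall>b\<in>set vs. Suc (Suc a) \<le> b"
  shows "hecke_word (a # vs) u = hecke_word (vs @ [a]) u"
  using assms
proof (induction vs arbitrary: u)
  case Nil
  then show ?case by simp
next
  case (Cons b vs)
  then have "hecke_word (a # b # vs) u = hecke_word (a # vs) (hecke b u)"
    by (simp add: hecke_commute)
  also have "\<dots> = hecke_word ((b # vs) @ [a]) u"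
    using Cons by simp
  finally show ?case .
qed

lemma hecke_word_commute:
  assumes "\<forall>a\<in>set ws. \<forall>b\<in>set vs. Suc (Suc a) \<le> b"
  shows "hecke_word (ws @ vs) u = hecke_word (vs @ ws) u"
  using assms
proof (induction ws arbitrary: u)
  case Nil
  then show ?case by simp
next
  case (Cons a ws)
  have "hecke_word ((a # ws) @ vs) u = hecke_word (vs @ ws) (hecke a u)"
    using Cons by simp
  also have "\<dots> = hecke_word ws (hecke_word (a # vs) u)"
    by (simp add: hecke_word_append)
  also have "hecke_word (a # vs) u = hecke_word (vs @ [a]) u"
    using Cons.prems by (intro hecke_word_commute_letter) simp
  also have "hecke_word ws (hecke_word (vs @ [a]) u) = hecke_word (vs @ a # ws) u"
    by (simp add: hecke_word_append)
  finally show ?case .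
qed

definition finitary :: "(nat \<Rightarrow> nat) \<Rightarrow> bool" where
  "finitary u \<longleftrightarrow> inj u \<and> finite {x. u x \<noteq> x}"

lemma finitary_id: "finitary id"
  by (simp add: finitary_def)

lemma s_s [simp]: "s a (s a x) = x"
  by (simp add: s_def)

lemma finitary_comp_s:
  assumes "finitary u"
  shows "finitary (u \<circ> s a)"
proof -
  have "inj (s a)"
    by (metis inj_on_inverseI s_s)
  moreover have "{x. (u \<circ> s a) x \<noteq> x} \<subseteq> {x. u x \<noteq> x} \<union> {a, Suc a}"
    by (auto simp: s_def)
  ultimately show ?thesis
    using assms by (auto simp: finitary_def inj_compose intro: finite_subset)
qed

lemma finitary_hecke: "finitary u \<Longrightarrow> finitary (hecke a u)"
  by (simp add: hecke_def finitary_comp_s)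

definition inversions :: "(nat \<Rightarrow> nat) \<Rightarrow> (nat \<times> nat) set" where
  "inversions u = {(i, j). 0 < i \<and> i < j \<and> u j < u i}"

lemma finite_inversions:
  assumes "finitary u"
  shows "finite (inversions u)"
proof -
  obtain N where "\<forall>x\<in>{x. u x \<noteq> x}. x < N"
    using assms unfolding finitary_def finite_nat_set_iff_bounded by blast
  then have N: "\<And>x. N \<le> x \<Longrightarrow> u x = x"
    by (meson leD mem_Collect_eq)
  define M where "M = N + (\<Sum>x<N. u x)"
  have bound: "u x \<le> M" if "x < N" for x
    using member_le_sum[of x "{..<N}" u] that by (simp add: M_def)
  have "inversions u \<subseteq> {..<N} \<times> {..M}"
  proof
    fix p assume "p \<in> inversions u"
    then obtain i j where p: "p = (i, j)" "i < j" "u j < u i"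
      by (auto simp: inversions_def)
    have "i < N"
    proof (rule ccontr)
      assume "\<not> i < N"
      then have "u i = i" "u j = j"
        using N p(2) by auto
      then show False
        using p by simp
    qed
    moreover have "j \<le> M"
    proof (cases "j < N")
      case True
      then show ?thesis by (simp add: M_def)
    next
      case False
      then show ?thesis
        using N[of j] bound[OF \<open>i < N\<close>] p by simp
    qed
    ultimately show "p \<in> {..<N} \<times> {..M}"
      using p by simp
  qed
  then show ?thesis
    by (rule finite_subset) simp
qed

lemma inversions_comp_s:
  assumes "0 < a" "u a < u (Suc a)"
  shows "inversions (u \<circ> s a) = insert (a, Suc a) ((\<lambda>(i, j). (s a i, s a j)) ` inversions u)"
    (is "_ = insert _ (?sw ` _)")
proof (intro set_eqI iffI)
  fix p assume p: "p \<in> inversions (u \<circ> s a)"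
  show "p \<in> insert (a, Suc a) (?sw ` inversions u)"
  proof (cases "p = (a, Suc a)")
    case False
    then have "?sw p \<in> inversions u"
      using p assms unfolding inversions_def by (auto simp: s_def split: if_splits)
    moreover have "p = ?sw (?sw p)"
      by (simp add: case_prod_beta)
    ultimately show ?thesis by blast
  qed simp
next
  fix p assume "p \<in> insert (a, Suc a) (?sw ` inversions u)"
  then show "p \<in> inversions (u \<circ> s a)"
    using assms unfolding inversions_def by (auto simp: s_def split: if_splits)
qed

lemma len_eq_card_inversions: "len u = card (inversions u)"
  by (simp add: len_def inversions_def)

lemma len_comp_s:
  assumes "finitary u" "0 < a" "u a < u (Suc a)"
  shows "len (u \<circ> s a) = len u + 1"
proof -
  have "inj_on (\<lambda>(i, j). (s a i, s a j)) (inversions u)"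
    by (rule inj_onI) (auto simp: s_def split: if_splits)
  moreover have "(a, Suc a) \<notin> (\<lambda>(i, j). (s a i, s a j)) ` inversions u"
    using assms(3) by (auto simp: inversions_def s_def split: if_splits)
  ultimately show ?thesis
    unfolding len_eq_card_inversions inversions_comp_s[OF assms(2,3)]
    using finite_inversions[OF assms(1)] by (simp add: card_image)
qed

lemma dstar_eq_hecke:
  assumes "finitary u" "0 < a"
  shows "dstar u a = hecke a u"
proof (cases "u a < u (Suc a)")
  case True
  then show ?thesis
    using len_comp_s[OF assms True] by (simp add: dstar_def hecke_def)
next
  case False
  define v where "v = u \<circ> s a"
  have "u a \<noteq> u (Suc a)"
    using assms(1) unfolding finitary_def by (metis injD n_not_Suc_n)
  then have "v a < v (Suc a)"
    using False by (simp add: v_def s_def)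
  then have "len (v \<circ> s a) = len v + 1"
    using len_comp_s assms finitary_comp_s v_def by blast
  moreover have "v \<circ> s a = u"
    by (simp add: v_def fun_eq_iff)
  ultimately have "len (u \<circ> s a) \<noteq> len u + 1"
    by (simp add: v_def)
  then show ?thesis
    using False by (simp add: dstar_def hecke_def)
qed

lemma foldl_dstar_eq_hecke_word:
  "finitary u \<Longrightarrow> \<forall>a\<in>set ws. 0 < a \<Longrightarrow> foldl dstar u ws = hecke_word ws u"
  by (induction ws arbitrary: u) (simp_all add: dstar_eq_hecke finitary_hecke)

section \<open>Products in the 0-Hecke algebra\<close>

text \<open>\<open>hecke_eval [(a\<^sub>1, x\<^sub>1), \<dots>, (a\<^sub>k, x\<^sub>k)]\<close> is the action of
  \<open>(1 + x\<^sub>1 \<pi>\<^sub>a\<^sub>1) \<cdots> (1 + x\<^sub>k \<pi>\<^sub>a\<^sub>k)\<close> from the 0-Hecke algebra on real functions of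
  permutations, where \<open>\<pi>\<^sub>a\<close> acts through \<open>hecke a\<close>.\<close>
fun hecke_eval :: "(nat \<times> real) list \<Rightarrow> ((nat \<Rightarrow> nat) \<Rightarrow> real) \<Rightarrow> (nat \<Rightarrow> nat) \<Rightarrow> real" where
  "hecke_eval [] G u = G u"
| "hecke_eval ((a, x) # ws) G u = hecke_eval ws G u + x * hecke_eval ws G (hecke a u)"

lemma hecke_eval_append: "hecke_eval (ws @ vs) G = hecke_eval ws (hecke_eval vs G)"
proof (induction ws)
  case (Cons p ws)
  then show ?case by (cases p) (simp add: fun_eq_iff)
qed (simp add: fun_eq_iff)

lemma hecke_eval_cong:
  "hecke_eval ws = hecke_eval vs \<Longrightarrow> hecke_eval (p @ ws @ q) = hecke_eval (p @ vs @ q)"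
  by (rule ext) (simp add: hecke_eval_append)

lemma hecke_eval_idem:
  "c = a + b + a * b \<Longrightarrow> hecke_eval [(k, a), (k, b)] = hecke_eval [(k, c)]"
  by (simp add: fun_eq_iff hecke_idem algebra_simps)

lemma hecke_eval_commute:
  assumes "Suc (Suc a) \<le> b \<or> Suc (Suc b) \<le> a"
  shows "hecke_eval [(a, p), (b, q)] = hecke_eval [(b, q), (a, p)]"
  by (intro ext) (simp add: hecke_commute[OF assms] algebra_simps)

lemma hecke_eval_braid:
  "c = a + b + a * b \<Longrightarrow>
    hecke_eval [(Suc k, b), (k, c), (Suc k, a)] = hecke_eval [(k, a), (Suc k, c), (k, b)]"
  by (simp add: fun_eq_iff hecke_idem hecke_braid algebra_simps)

lemma hecke_eval_commute_letter:
  "\<forall>b\<in>fst ` set ws. Suc (Suc a) \<le> b \<or> Suc (Suc b) \<le> a \<Longrightarrow>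
    hecke_eval ((a, p) # ws) = hecke_eval (ws @ [(a, p)])"
proof (induction ws)
  case (Cons bq ws)
  obtain b q where bq: "bq = (b, q)"
    by (cases bq)
  have "hecke_eval ((a, p) # bq # ws) = hecke_eval ([] @ [(a, p), (b, q)] @ ws)"
    using bq by simp
  also have "\<dots> = hecke_eval ([] @ [(b, q), (a, p)] @ ws)"
    using Cons.prems bq by (intro hecke_eval_cong hecke_eval_commute) auto
  also have "\<dots> = hecke_eval ([(b, q)] @ ((a, p) # ws) @ [])"
    by simp
  also have "hecke_eval ((a, p) # ws) = hecke_eval (ws @ [(a, p)])"
    using Cons.prems by (intro Cons.IH) simp
  then have "hecke_eval ([(b, q)] @ ((a, p) # ws) @ []) = hecke_eval ([(b, q)] @ (ws @ [(a, p)]) @ [])"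
    by (rule hecke_eval_cong)
  finally show ?case
    using bq by simp
qed simp

definition hecke_row :: "nat \<Rightarrow> nat \<Rightarrow> real \<Rightarrow> (nat \<times> real) list" where
  "hecke_row m n x = map (\<lambda>a. (a, x)) (rev [m..<m + n])"

lemma hecke_row_0 [simp]: "hecke_row m 0 x = []"
  by (simp add: hecke_row_def)

lemma hecke_row_Suc: "hecke_row m (Suc n) x = (m + n, x) # hecke_row m n x"
  by (simp add: hecke_row_def)

lemma fst_set_hecke_row: "fst ` set (hecke_row m n x) = {m..<m + n}"
  by (auto simp: hecke_row_def image_image)

lemma circle_add_solution:
  fixes x y :: real
  assumes "1 + y \<noteq> 0"
  shows "x = y + (x - y) / (1 + y) + y * ((x - y) / (1 + y))"
proof -
  have "y + (x - y) / (1 + y) + y * ((x - y) / (1 + y)) = y + (x - y) / (1 + y) * (1 + y)"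
    by (simp add: distrib_left distrib_right)
  also have "\<dots> = x"
    using assms by simp
  finally show ?thesis ..
qed

text \<open>Writing \<open>a \<oplus> b = a + b + ab\<close>, the letter \<open>d\<close> with \<open>y \<oplus> d = x\<close> is moved through
  both rows by the Yang--Baxter relation \<open>hecke_eval_braid\<close>.\<close>
lemma hecke_row_exchange:
  assumes yd: "x = y + d + y * d"
  shows "hecke_eval ((m + n, d) # hecke_row m n x @ hecke_row m (Suc n) y)
    = hecke_eval (hecke_row m n y @ hecke_row m (Suc n) x)"
proof (induction n)
  case 0
  have "x = d + y + d * y"
    using yd by (simp add: algebra_simps)
  then show ?case
    by (simp add: hecke_row_def hecke_eval_idem)
next
  case (Suc n)
  have far: "hecke_eval ((m + Suc n, y) # hecke_row m n x) = hecke_eval (hecke_row m n x @ [(m + Suc n, y)])"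
    by (rule hecke_eval_commute_letter) (auto simp: fst_set_hecke_row)
  have "hecke_eval ((m + Suc n, d) # hecke_row m (Suc n) x @ hecke_row m (Suc (Suc n)) y)
      = hecke_eval ([(m + Suc n, d), (m + n, x)] @ (hecke_row m n x @ [(m + Suc n, y)])
          @ ((m + n, y) # hecke_row m n y))"
    by (simp add: hecke_row_Suc)
  also have "\<dots> = hecke_eval ([(m + Suc n, d), (m + n, x)] @ ((m + Suc n, y) # hecke_row m n x)
          @ ((m + n, y) # hecke_row m n y))"
    by (rule hecke_eval_cong) (rule far[symmetric])
  also have "\<dots> = hecke_eval ([] @ [(Suc (m + n), d), (m + n, x), (Suc (m + n), y)]
          @ (hecke_row m n x @ (m + n, y) # hecke_row m n y))"
    by simp
  also have "\<dots> = hecke_eval ([] @ [(m + n, y), (Suc (m + n), x), (m + n, d)]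
          @ (hecke_row m n x @ (m + n, y) # hecke_row m n y))"
    by (intro hecke_eval_cong hecke_eval_braid yd)
  also have "\<dots> = hecke_eval ([(m + n, y), (Suc (m + n), x)]
          @ ((m + n, d) # hecke_row m n x @ hecke_row m (Suc n) y) @ [])"
    by (simp add: hecke_row_Suc)
  also have "\<dots> = hecke_eval ([(m + n, y), (Suc (m + n), x)]
          @ (hecke_row m n y @ hecke_row m (Suc n) x) @ [])"
    by (intro hecke_eval_cong Suc.IH)
  also have "\<dots> = hecke_eval ([(m + n, y)] @ ((Suc (m + n), x) # hecke_row m n y)
          @ hecke_row m (Suc n) x)"
    by simp
  also have "\<dots> = hecke_eval ([(m + n, y)] @ (hecke_row m n y @ [(Suc (m + n), x)])
          @ hecke_row m (Suc n) x)"
    by (intro hecke_eval_cong hecke_eval_commute_letter) (auto simp: fst_set_hecke_row)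
  also have "\<dots> = hecke_eval (hecke_row m (Suc n) y @ hecke_row m (Suc (Suc n)) x)"
    by (simp add: hecke_row_Suc)
  finally show ?case .
qed

lemma hecke_rows_commute:
  fixes x y :: real
  assumes y: "1 + y \<noteq> 0"
  shows "hecke_eval (hecke_row m n x @ hecke_row m n y) = hecke_eval (hecke_row m n y @ hecke_row m n x)"
proof (cases n)
  case (Suc k)
  define d where "d = (x - y) / (1 + y)"
  have yd: "x = y + d + y * d"
    unfolding d_def by (rule circle_add_solution[OF y])
  have "hecke_eval (hecke_row m n x @ hecke_row m n y)
      = hecke_eval ([] @ [(m + k, x)] @ (hecke_row m k x @ hecke_row m (Suc k) y))"
    by (simp add: Suc hecke_row_Suc)
  also have "\<dots> = hecke_eval ([] @ [(m + k, y), (m + k, d)] @ (hecke_row m k x @ hecke_row m (Suc k) y))"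
    by (intro hecke_eval_cong hecke_eval_idem[symmetric] yd)
  also have "\<dots> = hecke_eval ([(m + k, y)] @ ((m + k, d) # hecke_row m k x @ hecke_row m (Suc k) y) @ [])"
    by simp
  also have "\<dots> = hecke_eval ([(m + k, y)] @ (hecke_row m k y @ hecke_row m (Suc k) x) @ [])"
    by (intro hecke_eval_cong hecke_row_exchange yd)
  also have "\<dots> = hecke_eval (hecke_row m n y @ hecke_row m n x)"
    by (simp add: Suc hecke_row_Suc)
  finally show ?thesis .
qed simp

lemma sum_Pow_insert:
  assumes "finite A" "a \<notin> A"
  shows "(\<Sum>S\<in>Pow (insert a A). f S) = (\<Sum>S\<in>Pow A. f S) + (\<Sum>S\<in>Pow A. f (insert a S))"
proof -
  have "inj_on (insert a) (Pow A)"
    using assms(2) by (intro inj_onI) (metis PowD insert_ident subset_iff)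
  then show ?thesis
    unfolding Pow_insert using assms
    by (subst sum.union_disjoint) (auto simp: sum.reindex)
qed

lemma hecke_eval_expand:
  assumes "distinct L"
  shows "hecke_eval (map (\<lambda>a. (a, x)) L @ rest) G u
    = (\<Sum>S\<in>Pow (set L). x ^ card S * hecke_eval rest G (hecke_word (filter (\<lambda>a. a \<in> S) L) u))"
  using assms
proof (induction L arbitrary: u)
  case (Cons a L)
  then have aL: "a \<notin> set L" and "distinct L"
    by auto
  define f where "f S = x ^ card S * hecke_eval rest G (hecke_word (filter (\<lambda>b. b \<in> S) (a # L)) u)"
    for S
  have without_a: "f S = x ^ card S * hecke_eval rest G (hecke_word (filter (\<lambda>b. b \<in> S) L) u)"
    if "S \<in> Pow (set L)" for S
    using that aL by (auto simp: f_def)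
  have with_a: "f (insert a S)
      = x * (x ^ card S * hecke_eval rest G (hecke_word (filter (\<lambda>b. b \<in> S) L) (hecke a u)))"
    if "S \<in> Pow (set L)" for S
  proof -
    have "a \<notin> S" "finite S" "filter (\<lambda>b. b \<in> insert a S) L = filter (\<lambda>b. b \<in> S) L"
      using that aL finite_subset[of S "set L"] by (auto intro!: filter_cong)
    then show ?thesis
      by (simp add: f_def)
  qed
  have "(\<Sum>S\<in>Pow (set (a # L)). f S) = (\<Sum>S\<in>Pow (set L). f S) + (\<Sum>S\<in>Pow (set L). f (insert a S))"
    using aL by (simp add: sum_Pow_insert)
  also have "\<dots> = hecke_eval (map (\<lambda>a. (a, x)) (a # L) @ rest) G u"
    using Cons.IH[OF \<open>distinct L\<close>] by (simp add: without_a with_a sum_distrib_left)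
  finally show ?case
    by (simp add: f_def)
qed simp

definition desc_word :: "nat set \<Rightarrow> nat list" where
  "desc_word A = rev (sorted_list_of_set A)"

lemma filter_upt_eq_sorted_list_of_set:
  assumes "A \<subseteq> {m..<k}"
  shows "filter (\<lambda>a. a \<in> A) [m..<k] = sorted_list_of_set A"
proof (rule strict_sorted_equal)
  show "set (filter (\<lambda>a. a \<in> A) [m..<k]) = set (sorted_list_of_set A)"
    using assms finite_subset[OF assms] by auto
qed (auto intro: sorted_wrt_filter)

lemma filter_rev_upt_eq_desc_word:
  "A \<subseteq> {m..<k} \<Longrightarrow> filter (\<lambda>a. a \<in> A) (rev [m..<k]) = desc_word A"
  by (simp add: desc_word_def filter_upt_eq_sorted_list_of_set flip: rev_filter)

lemma hecke_rows_expand: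
  "hecke_eval (hecke_row m n x @ hecke_row m n y) G u
    = (\<Sum>A\<in>Pow {m..<m + n}. \<Sum>B\<in>Pow {m..<m + n}.
         x ^ card A * y ^ card B * G (hecke_word (desc_word B) (hecke_word (desc_word A) u)))"
proof -
  have "distinct (rev [m..<m + n])" "set (rev [m..<m + n]) = {m..<m + n}"
    by simp_all
  note expand = hecke_eval_expand[OF this(1), unfolded this(2)]
  show ?thesis
    unfolding hecke_row_def expand[of x] expand[of y "[]", simplified]
    by (auto simp: sum_distrib_left mult.assoc filter_rev_upt_eq_desc_word intro!: sum.cong)
qed

lemma sum_hecke_pairs_symmetric:
  fixes x y :: real
  assumes "1 + y \<noteq> 0"
  shows "(\<Sum>(A, B)\<in>{(A, B). A \<subseteq> {m..<m + n} \<and> B \<subseteq> {m..<m + n}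
            \<and> P (hecke_word (desc_word B) (hecke_word (desc_word A) u))}. x ^ card A * y ^ card B)
       = (\<Sum>(A, B)\<in>{(A, B). A \<subseteq> {m..<m + n} \<and> B \<subseteq> {m..<m + n}
            \<and> P (hecke_word (desc_word B) (hecke_word (desc_word A) u))}. y ^ card A * x ^ card B)"
proof -
  define G where "G v = (if P v then 1 else 0 :: real)" for v
  have "(\<Sum>(A, B)\<in>{(A, B). A \<subseteq> {m..<m + n} \<and> B \<subseteq> {m..<m + n}
            \<and> P (hecke_word (desc_word B) (hecke_word (desc_word A) u))}. x ^ card A * y ^ card B)
      = hecke_eval (hecke_row m n x @ hecke_row m n y) G u" for x y :: real
  proof -
    let ?I = "{m..<m + n}" and ?Q = "\<lambda>A B. P (hecke_word (desc_word B) (hecke_word (desc_word A) u))"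
    have "{(A, B). A \<subseteq> ?I \<and> B \<subseteq> ?I \<and> ?Q A B} = {p \<in> Pow ?I \<times> Pow ?I. ?Q (fst p) (snd p)}"
      by auto
    then show ?thesis
      unfolding hecke_rows_expand sum.cartesian_product
      by (simp add: sum.inter_filter case_prod_beta G_def) (rule sum.cong; simp)
  qed
  then show ?thesis
    using hecke_rows_commute[OF assms, of m n x] by simp
qed

lemma Max_insert_0_eq_iff:
  fixes C :: "nat set"
  assumes "finite C" "C \<subseteq> {..T}" "0 < T"
  shows "Max (insert 0 C) = T \<longleftrightarrow> T \<in> C"
proof
  assume "Max (insert 0 C) = T"
  then show "T \<in> C"
    using Max_in[of "insert 0 C"] assms by auto
qed (use assms in \<open>auto intro: Max_eqI\<close>)

lemma sum_hecke_pairs_top_symmetric: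
  fixes x y :: real and m T :: nat and P :: "(nat \<Rightarrow> nat) \<Rightarrow> bool" and u :: "nat \<Rightarrow> nat"
  assumes "1 + y \<noteq> 0" "0 < m"
  defines "S \<equiv> {(A, B). A \<subseteq> {m..T} \<and> B \<subseteq> {m..T} \<and> Max (insert 0 (A \<union> B)) = T
                 \<and> P (hecke_word (desc_word B) (hecke_word (desc_word A) u))}"
  shows "(\<Sum>(A, B)\<in>S. x ^ card A * y ^ card B) = (\<Sum>(A, B)\<in>S. y ^ card A * x ^ card B)"
proof (cases "m \<le> T")
  case True
  define window where "window n = {(A, B). A \<subseteq> {m..<m + n} \<and> B \<subseteq> {m..<m + n}
      \<and> P (hecke_word (desc_word B) (hecke_word (desc_word A) u))}" for n
  have intervals: "{m..<m + (Suc T - m)} = {m..T}" "{m..<m + (T - m)} = {m..<T}"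
    using True by auto
  moreover have top: "Max (insert 0 (A \<union> B)) = T \<longleftrightarrow> \<not> (A \<subseteq> {m..<T} \<and> B \<subseteq> {m..<T})"
    if "A \<subseteq> {m..T}" "B \<subseteq> {m..T}" for A B
  proof -
    have "Max (insert 0 (A \<union> B)) = T \<longleftrightarrow> T \<in> A \<union> B"
      using that True assms(2) by (intro Max_insert_0_eq_iff) (auto intro: finite_subset)
    also have "\<dots> \<longleftrightarrow> \<not> (A \<subseteq> {m..<T} \<and> B \<subseteq> {m..<T})"
      using that by (fastforce simp: subset_iff order.order_iff_strict)
    finally show ?thesis .
  qed
  have "S = window (Suc T - m) - window (T - m)"
    unfolding S_def window_def intervals using top by blast
  moreover have "window (T - m) \<subseteq> window (Suc T - m)"
    unfolding window_def intervals by auto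
  moreover have "finite (window (Suc T - m))"
    unfolding window_def intervals by (rule finite_subset[of _ "Pow {m..T} \<times> Pow {m..T}"]) auto
  moreover have "(\<Sum>(A, B)\<in>window n. x ^ card A * y ^ card B) = (\<Sum>(A, B)\<in>window n. y ^ card A * x ^ card B)"
    for n
    unfolding window_def by (rule sum_hecke_pairs_symmetric[OF assms(1)])
  ultimately show ?thesis
    by (simp add: sum_diff)
next
  case False
  then have "\<forall>p\<in>S. p = ({}, {})"
    unfolding S_def by auto
  then show ?thesis
    by (intro sum.cong) auto
qed

section \<open>Symmetric generating functions and involutions\<close>

lemma polyfun_eq_0_on_pos:
  fixes c :: "nat \<Rightarrow> real"
  assumes "\<And>x. 0 < x \<Longrightarrow> (\<Sum>i\<le>n. c i * x ^ i) = 0" "i \<le> n"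
  shows "c i = 0"
proof -
  have "{0<..} \<subseteq> {x. (\<Sum>i\<le>n. c i * x ^ i) = 0}"
    using assms(1) by auto
  then have "infinite {x. (\<Sum>i\<le>n. c i * x ^ i) = 0}"
    using infinite_Ioi finite_subset by blast
  then show ?thesis
    using polyfun_finite_roots[of c n] assms(2) by auto
qed

lemma bivariate_polyfun_eq_0_on_pos:
  fixes d :: "nat \<Rightarrow> nat \<Rightarrow> real"
  assumes "\<And>x y. 0 < x \<Longrightarrow> 0 < y \<Longrightarrow> (\<Sum>p\<le>N. \<Sum>q\<le>N. d p q * x ^ p * y ^ q) = 0"
    and "p \<le> N" "q \<le> N"
  shows "d p q = 0"
proof -
  have "(\<Sum>q\<le>N. d p q * y ^ q) = 0" if "0 < y" for y :: real
  proof (rule polyfun_eq_0_on_pos[OF _ \<open>p \<le> N\<close>])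
    fix x :: real assume "0 < x"
    have "(\<Sum>p\<le>N. (\<Sum>q\<le>N. d p q * y ^ q) * x ^ p) = (\<Sum>p\<le>N. \<Sum>q\<le>N. d p q * x ^ p * y ^ q)"
      by (simp add: sum_distrib_left sum_distrib_right mult_ac)
    also have "\<dots> = 0"
      using assms(1)[OF \<open>0 < x\<close> \<open>0 < y\<close>] .
    finally show "(\<Sum>p\<le>N. (\<Sum>q\<le>N. d p q * y ^ q) * x ^ p) = 0" .
  qed
  then show ?thesis
    using polyfun_eq_0_on_pos[where c = "d p" and n = N and i = q] \<open>q \<le> N\<close> by simp
qed

lemma sum_by_fibres:
  fixes h :: "nat \<Rightarrow> nat \<Rightarrow> real"
  assumes "finite K" "\<And>k. k \<in> K \<Longrightarrow> f k \<le> N \<and> g k \<le> N"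
  shows "(\<Sum>k\<in>K. h (f k) (g k)) = (\<Sum>p\<le>N. \<Sum>q\<le>N. card {k\<in>K. f k = p \<and> g k = q} * h p q)"
proof -
  have "(\<Sum>k\<in>K. h (f k) (g k)) = (\<Sum>p\<le>N. \<Sum>k\<in>{k\<in>K. f k = p}. h (f k) (g k))"
    using assms by (intro sum.group[symmetric]) auto
  also have "\<dots> = (\<Sum>p\<le>N. \<Sum>q\<le>N. \<Sum>k\<in>{k\<in>{k\<in>K. f k = p}. g k = q}. h (f k) (g k))"
    using assms by (intro sum.cong refl sum.group[symmetric]) auto
  also have "\<dots> = (\<Sum>p\<le>N. \<Sum>q\<le>N. card {k\<in>K. f k = p \<and> g k = q} * h p q)"
    by (intro sum.cong refl) (simp add: Collect_conj_eq Int_assoc)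
  finally show ?thesis .
qed

lemma card_fibres_swap:
  assumes fin: "finite K"
    and sym: "\<And>x y :: real. 0 < x \<Longrightarrow> 0 < y \<Longrightarrow>
      (\<Sum>k\<in>K. x ^ f k * y ^ g k) = (\<Sum>k\<in>K. x ^ g k * y ^ f k)"
  shows "card {k\<in>K. f k = a \<and> g k = b} = card {k\<in>K. f k = b \<and> g k = a}"
proof -
  define N where "N = Max (insert 0 (f ` K \<union> g ` K))"
  have bounded: "f k \<le> N \<and> g k \<le> N" if "k \<in> K" for k
    using that fin unfolding N_def by (auto intro: Max_ge)
  define c where "c p q = real (card {k\<in>K. f k = p \<and> g k = q})" for p q
  have vanish: "(\<Sum>p\<le>N. \<Sum>q\<le>N. (c p q - c q p) * x ^ p * y ^ q) = 0"
    if "0 < x" "0 < y" for x y :: real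
  proof -
    have "(\<Sum>p\<le>N. \<Sum>q\<le>N. c p q * (x ^ p * y ^ q)) = (\<Sum>p\<le>N. \<Sum>q\<le>N. c p q * (x ^ q * y ^ p))"
      using sym[OF that] sum_by_fibres[OF fin bounded, where h = "\<lambda>p q. x ^ p * y ^ q"]
        sum_by_fibres[OF fin bounded, where h = "\<lambda>p q. x ^ q * y ^ p"]
      by (simp add: c_def)
    also have "\<dots> = (\<Sum>p\<le>N. \<Sum>q\<le>N. c q p * (x ^ p * y ^ q))"
      by (rule sum.swap)
    finally show ?thesis
      by (simp add: algebra_simps sum_subtractf)
  qed
  show ?thesis
  proof (cases "a \<le> N \<and> b \<le> N")
    case True
    then have "c a b - c b a = 0"
      using vanish by (intro bivariate_polyfun_eq_0_on_pos[where d = "\<lambda>p q. c p q - c q p"]) auto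
    then show ?thesis
      by (simp add: c_def)
  next
    case False
    then have "{k\<in>K. f k = a \<and> g k = b} = {}" "{k\<in>K. f k = b \<and> g k = a} = {}"
      using bounded by force+
    then show ?thesis
      by (simp only:)
  qed
qed

lemma involution_swapping:
  fixes f g :: "'a \<Rightarrow> nat"
  assumes fin: "finite K"
    and card: "\<And>a b. card {k\<in>K. f k = a \<and> g k = b} = card {k\<in>K. f k = b \<and> g k = a}"
  shows "\<exists>\<sigma>. \<forall>k\<in>K. \<sigma> k \<in> K \<and> \<sigma> (\<sigma> k) = k \<and> f (\<sigma> k) = g k"
proof -
  define F where "F a b = {k\<in>K. f k = a \<and> g k = b}" for a b
  have "\<exists>h. bij_betw h (F a b) (F b a)" for a b
    using card[of a b] fin by (intro finite_same_card_bij) (auto simp: F_def)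
  then obtain h where h: "\<And>a b. bij_betw (h a b) (F a b) (F b a)"
    by metis
  define \<sigma> where "\<sigma> k = (if f k < g k then h (f k) (g k) k
      else if g k < f k then inv_into (F (g k) (f k)) (h (g k) (f k)) k else k)" for k
  have "\<sigma> k \<in> F (g k) (f k) \<and> \<sigma> (\<sigma> k) = k" if "k \<in> F a b" for a b k
  proof -
    consider "a < b" | "b < a" | "a = b"
      by linarith
    then show ?thesis
    proof cases
      case 1
      have "h a b k \<in> F b a"
        using h[of a b] that by (auto dest: bij_betwE)
      then show ?thesis
        using 1 that h[of a b] by (auto simp: \<sigma>_def F_def bij_betw_def)
    next
      case 2
      have "inv_into (F b a) (h b a) k \<in> F b a"
        using h[of b a] that by (metis bij_betw_def inv_into_into)
      then show ?thesis
        using 2 that h[of b a] by (auto simp: \<sigma>_def F_def bij_betw_def f_inv_into_f)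
    next
      case 3
      then show ?thesis
        using that by (simp add: \<sigma>_def F_def)
    qed
  qed
  then show ?thesis
    by (auto simp: F_def)
qed

lemma classwise_involution:
  assumes self: "\<And>D. D \<in> S \<Longrightarrow> D \<in> C D"
    and same: "\<And>D E. D \<in> S \<Longrightarrow> E \<in> C D \<Longrightarrow> C E = C D"
    and inv: "\<And>D. D \<in> S \<Longrightarrow> \<exists>\<sigma>. \<forall>E\<in>C D. \<sigma> E \<in> C D \<and> \<sigma> (\<sigma> E) = E \<and> f (\<sigma> E) = g E"
  shows "\<exists>\<tau>. \<forall>D\<in>S. \<tau> D \<in> C D \<and> \<tau> (\<tau> D) = D \<and> f (\<tau> D) = g D"
proof -
  define \<sigma> where "\<sigma> K = (SOME \<sigma>. \<forall>E\<in>K. \<sigma> E \<in> K \<and> \<sigma> (\<sigma> E) = E \<and> f (\<sigma> E) = g E)" for K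
  have "\<sigma> (C D) (\<sigma> (C D) D) = D \<and> \<sigma> (C D) D \<in> C D \<and> f (\<sigma> (C D) D) = g D" if "D \<in> S" for D
    using someI_ex[OF inv[OF that]] self[OF that] unfolding \<sigma>_def by blast
  moreover have "C (\<sigma> (C D) D) = C D" if "D \<in> S" for D
    using same[OF that] calculation[OF that] by blast
  ultimately show ?thesis
    by (intro exI[of _ "\<lambda>D. \<sigma> (C D) D"]) auto
qed

section \<open>Reading words and start columns\<close>

lemma finite_row: "finite D \<Longrightarrow> finite {c. (r, c) \<in> D}"
  by (rule finite_subset[of _ "snd ` D"]) force+

definition row_word :: "(nat \<times> nat) set \<Rightarrow> nat \<Rightarrow> nat list" where
  "row_word D r = map (\<lambda>c. r + c - 1) (rev (sorted_list_of_set {c. (r, c) \<in> D}))"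

lemma reading_word_eq_rows:
  assumes fin: "finite D" and R: "Max (insert 0 (fst ` D)) \<le> R"
  shows "reading_word D = concat (map (row_word D) [1..<Suc R])"
proof -
  define R0 where "R0 = Max (insert 0 (fst ` D))"
  have bound: "r \<le> R0" if "(r, c) \<in> D" for r c
    using fin that unfolding R0_def by (intro Max_ge) force+
  have "{c. (r, c) \<in> D} = {}" if "R0 < r" for r
    using bound that by (auto simp: not_le[symmetric])
  then have "row_word D r = []" if "R0 < r" for r
    unfolding row_word_def using that by simp
  then have "concat (map (row_word D) [Suc R0..<Suc R]) = []"
    by auto
  moreover have "[1..<Suc R] = [1..<Suc R0] @ [Suc R0..<Suc R]"
    using R upt_add_eq_append[of 1 "Suc R0" "R - R0"] by (simp add: R0_def)
  moreover have "reading_word D = concat (map (row_word D) [1..<Suc R0])"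
    unfolding reading_word_def R0_def row_word_def[abs_def] ..
  ultimately show ?thesis
    by simp
qed

lemma reading_word_pos:
  assumes "pipe_dream D" "a \<in> set (reading_word D)"
  shows "0 < a"
  using assms finite_row[of D]
  by (fastforce simp: reading_word_def pipe_dream_def)

lemma demazure_eq_hecke_word: "pipe_dream D \<Longrightarrow> demazure D = hecke_word (reading_word D) id"
  unfolding demazure_def by (rule foldl_dstar_eq_hecke_word[OF finitary_id]) (auto dest: reading_word_pos)

lemma
  assumes "finite D"
  shows start_ge_1: "1 \<le> start i D"
    and start_not_mem: "(i, start i D) \<notin> D"
    and mem_before_start: "1 \<le> c \<Longrightarrow> c < start i D \<Longrightarrow> (i, c) \<in> D"
proof -
  define free where "free = Suc (Max (insert 0 (snd ` D)))"
  have "(i, free) \<notin> D"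
  proof
    assume "(i, free) \<in> D"
    then have "free \<le> Max (insert 0 (snd ` D))"
      using assms by (intro Max_ge) force+
    then show False
      by (simp add: free_def)
  qed
  moreover have "1 \<le> free"
    by (simp add: free_def)
  ultimately show "1 \<le> start i D" "(i, start i D) \<notin> D"
    unfolding start_def using LeastI[of "\<lambda>c. 1 \<le> c \<and> (i, c) \<notin> D"] by blast+
  show "(i, c) \<in> D" if "1 \<le> c" "c < start i D"
    using not_less_Least[of c "\<lambda>c. 1 \<le> c \<and> (i, c) \<notin> D"] that unfolding start_def by blast
qed

lemma start_eqI:
  assumes "1 \<le> c" "(i, c) \<notin> D" "\<And>c'. 1 \<le> c' \<Longrightarrow> c' < c \<Longrightarrow> (i, c') \<in> D"
  shows "start i D = c"
  unfolding start_def using assms by (intro Least_equality) (auto simp: not_less[symmetric])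

section \<open>Rows \<open>i\<close> and \<open>i + 1\<close> of a pipe dream\<close>

lemma sorted_list_of_set_Un_less:
  fixes X Y :: "nat set"
  assumes "finite X" "finite Y" "\<And>x y. x \<in> X \<Longrightarrow> y \<in> Y \<Longrightarrow> x < y"
  shows "sorted_list_of_set (X \<union> Y) = sorted_list_of_set X @ sorted_list_of_set Y"
  using assms by (intro strict_sorted_equal) (auto simp: sorted_wrt_append)

lemma sorted_list_of_set_image_strict_mono:
  fixes X :: "nat set" and f :: "nat \<Rightarrow> nat"
  assumes "finite X" "strict_mono f"
  shows "sorted_list_of_set (f ` X) = map f (sorted_list_of_set X)"
  using assms
  by (intro strict_sorted_equal) (auto simp: sorted_wrt_map strict_mono_def intro: sorted_wrt_mono_rel[of _ "(<)"])

lemma desc_word_image_strict_mono: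
  fixes X :: "nat set" and f :: "nat \<Rightarrow> nat"
  shows "finite X \<Longrightarrow> strict_mono f \<Longrightarrow> map f (rev (sorted_list_of_set X)) = desc_word (f ` X)"
  by (simp add: desc_word_def sorted_list_of_set_image_strict_mono rev_map)

text \<open>The crosses of rows \<open>i\<close> and \<open>i + 1\<close> weakly right of column \<open>start i D\<close> are recorded by
  their letters in the reading word; everything else is the frozen part.\<close>
definition frozen_part :: "nat \<Rightarrow> (nat \<times> nat) set \<Rightarrow> (nat \<times> nat) set" where
  "frozen_part i D = {(r, c) \<in> D. (r \<noteq> i \<and> r \<noteq> Suc i) \<or> c < start i D}"

definition upper_letters :: "nat \<Rightarrow> (nat \<times> nat) set \<Rightarrow> nat set" where
  "upper_letters i D = (\<lambda>c. i + c - 1) ` {c. (i, c) \<in> D \<and> start i D < c}"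

definition lower_letters :: "nat \<Rightarrow> (nat \<times> nat) set \<Rightarrow> nat set" where
  "lower_letters i D = (\<lambda>c. i + c) ` {c. (Suc i, c) \<in> D \<and> start i D \<le> c}"

definition assemble :: "nat \<Rightarrow> (nat \<times> nat) set \<Rightarrow> nat set \<Rightarrow> nat set \<Rightarrow> (nat \<times> nat) set" where
  "assemble i D A B = frozen_part i D \<union> (\<lambda>a. (i, a + 1 - i)) ` A \<union> (\<lambda>b. (Suc i, b - i)) ` B"

lemma mem_frozen_part_iff:
  "(r \<noteq> i \<and> r \<noteq> Suc i) \<or> c < start i D \<Longrightarrow> (r, c) \<in> frozen_part i D \<longleftrightarrow> (r, c) \<in> D"
  by (auto simp: frozen_part_def)

lemma upper_letters_ge: "a \<in> upper_letters i D \<Longrightarrow> i + start i D \<le> a"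
  by (auto simp: upper_letters_def)

lemma lower_letters_ge: "b \<in> lower_letters i D \<Longrightarrow> i + start i D \<le> b"
  by (auto simp: lower_letters_def)

context
  fixes D :: "(nat \<times> nat) set"
  assumes pd: "pipe_dream D"
begin

lemma finite_pipe_dream: "finite D"
  using pd by (simp add: pipe_dream_def)

lemma row_frozen_part: "{c. (i, c) \<in> frozen_part i D} = {1..<start i D}"
  using pd mem_before_start[OF finite_pipe_dream] by (auto simp: frozen_part_def pipe_dream_def)

lemma finite_upper_letters: "finite (upper_letters i D)"
  unfolding upper_letters_def using finite_row[OF finite_pipe_dream] by (auto intro: finite_subset)

lemma finite_lower_letters: "finite (lower_letters i D)"
  unfolding lower_letters_def using finite_row[OF finite_pipe_dream] by (auto intro: finite_subset)

lemma assemble_upper_lower: "assemble i D (upper_letters i D) (lower_letters i D) = D"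
proof (intro set_eqI iffI)
  fix p assume "p \<in> assemble i D (upper_letters i D) (lower_letters i D)"
  then show "p \<in> D"
    using start_ge_1[OF finite_pipe_dream, of i]
    by (auto simp: assemble_def frozen_part_def upper_letters_def lower_letters_def)
next
  fix p assume p: "p \<in> D"
  obtain r c where rc: "p = (r, c)"
    by (cases p)
  consider "(r \<noteq> i \<and> r \<noteq> Suc i) \<or> c < start i D" | "r = i" "start i D < c" | "r = Suc i" "start i D \<le> c"
    using p rc start_not_mem[OF finite_pipe_dream, of i] by (cases "c = start i D") force+
  then show "p \<in> assemble i D (upper_letters i D) (lower_letters i D)"
  proof cases
    case 2
    then have "(i, c) = (\<lambda>a. (i, a + 1 - i)) (i + c - 1)" "i + c - 1 \<in> upper_letters i D"
      using p rc by (auto simp: upper_letters_def)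
    then show ?thesis
      unfolding assemble_def rc 2 by blast
  next
    case 3
    then have "(Suc i, c) = (\<lambda>b. (Suc i, b - i)) (i + c)" "i + c \<in> lower_letters i D"
      using p rc by (auto simp: lower_letters_def)
    then show ?thesis
      unfolding assemble_def rc 3 by blast
  qed (use p rc in \<open>auto simp: assemble_def frozen_part_def\<close>)
qed

lemma lcount_eq_card_upper_letters: "lcount i i D = card (upper_letters i D)"
proof -
  have "{c. (i, c) \<in> D \<and> start i D \<le> c} = {c. (i, c) \<in> D \<and> start i D < c}"
    using start_not_mem[OF finite_pipe_dream, of i] by (auto simp: order.order_iff_strict)
  moreover have "inj_on (\<lambda>c. i + c - 1) {c. (i, c) \<in> D \<and> start i D < c}"
    using start_ge_1[OF finite_pipe_dream, of i] by (intro inj_onI) auto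
  ultimately show ?thesis
    by (simp add: lcount_def upper_letters_def card_image)
qed

lemma lcount_Suc_eq_card_lower_letters: "lcount i (Suc i) D = card (lower_letters i D)"
  by (simp add: lcount_def lower_letters_def card_image)

context
  fixes i :: nat
  assumes i: "1 \<le> i"
begin

context
  fixes A B :: "nat set"
  assumes fin: "finite A" "finite B"
    and A: "\<forall>a\<in>A. i + start i D \<le> a" and B: "\<forall>b\<in>B. i + start i D \<le> b"
begin

lemma pipe_dream_assemble: "pipe_dream (assemble i D A B)"
  using pd fin A B i start_ge_1[OF finite_pipe_dream, of i] finite_subset[of "frozen_part i D" D]
  by (fastforce simp: pipe_dream_def assemble_def frozen_part_def)

lemma start_assemble: "start i (assemble i D A B) = start i D"
proof (rule start_eqI[OF start_ge_1[OF finite_pipe_dream]])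
  show "(i, start i D) \<notin> assemble i D A B"
    using start_not_mem[OF finite_pipe_dream, of i] A
    by (fastforce simp: assemble_def frozen_part_def)
qed (use mem_before_start[OF finite_pipe_dream] in \<open>auto simp: assemble_def frozen_part_def\<close>)

lemma frozen_part_assemble: "frozen_part i (assemble i D A B) = frozen_part i D"
  unfolding frozen_part_def[of i "assemble i D A B"] start_assemble
  using A B by (auto simp: assemble_def frozen_part_def)

lemma upper_letters_assemble: "upper_letters i (assemble i D A B) = A"
proof -
  have "{c. (i, c) \<in> assemble i D A B \<and> start i D < c} = (\<lambda>a. a + 1 - i) ` A"
    using A by (force simp: assemble_def frozen_part_def)
  moreover have "(\<lambda>c. i + c - 1) ` (\<lambda>a. a + 1 - i) ` A = A"
    using A i by (force simp: image_image)
  ultimately show ?thesis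
    by (simp add: upper_letters_def start_assemble)
qed

lemma lower_letters_assemble: "lower_letters i (assemble i D A B) = B"
proof -
  have "{c. (Suc i, c) \<in> assemble i D A B \<and> start i D \<le> c} = (\<lambda>b. b - i) ` B"
    using B by (force simp: assemble_def frozen_part_def)
  moreover have "(\<lambda>c. i + c) ` (\<lambda>b. b - i) ` B = B"
    using B by (force simp: image_image)
  ultimately show ?thesis
    by (simp add: lower_letters_def start_assemble)
qed

lemma row_word_assemble_other:
  "r \<noteq> i \<Longrightarrow> r \<noteq> Suc i \<Longrightarrow> row_word (assemble i D A B) r = row_word D r"
proof -
  assume "r \<noteq> i" "r \<noteq> Suc i"
  then have "{c. (r, c) \<in> assemble i D A B} = {c. (r, c) \<in> D}"
    by (auto simp: assemble_def frozen_part_def)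
  then show ?thesis
    by (simp add: row_word_def)
qed

lemma row_word_assemble_upper:
  "row_word (assemble i D A B) i = desc_word A @ map (\<lambda>c. i + c - 1) (rev [1..<start i D])"
proof -
  have "{c. (i, c) \<in> assemble i D A B} = {1..<start i D} \<union> (\<lambda>a. a + 1 - i) ` A"
    unfolding row_frozen_part[symmetric] by (auto simp: assemble_def)
  moreover have "sorted_list_of_set ({1..<start i D} \<union> (\<lambda>a. a + 1 - i) ` A)
      = [1..<start i D] @ sorted_list_of_set ((\<lambda>a. a + 1 - i) ` A)"
    using fin A by (subst sorted_list_of_set_Un_less) fastforce+
  moreover have "map (\<lambda>c. i + c - 1) (rev (sorted_list_of_set ((\<lambda>a. a + 1 - i) ` A)))
      = desc_word ((\<lambda>c. i + c - 1) ` (\<lambda>a. a + 1 - i) ` A)"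
    using fin i by (intro desc_word_image_strict_mono) (auto simp: strict_mono_def)
  moreover have "(\<lambda>c. i + c - 1) ` (\<lambda>a. a + 1 - i) ` A = A"
    using A i by (force simp: image_image)
  ultimately show ?thesis
    by (simp add: row_word_def)
qed

lemma row_word_assemble_lower:
  "row_word (assemble i D A B) (Suc i) = desc_word B @ row_word (frozen_part i D) (Suc i)"
proof -
  have "{c. (Suc i, c) \<in> assemble i D A B} = {c. (Suc i, c) \<in> frozen_part i D} \<union> (\<lambda>b. b - i) ` B"
    by (auto simp: assemble_def)
  moreover have "sorted_list_of_set ({c. (Suc i, c) \<in> frozen_part i D} \<union> (\<lambda>b. b - i) ` B)
      = sorted_list_of_set {c. (Suc i, c) \<in> frozen_part i D} @ sorted_list_of_set ((\<lambda>b. b - i) ` B)"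
    using fin B finite_row[OF finite_pipe_dream, of "Suc i"]
    by (subst sorted_list_of_set_Un_less) (fastforce simp: frozen_part_def intro: finite_subset)+
  moreover have "map (\<lambda>c. Suc i + c - 1) (rev (sorted_list_of_set ((\<lambda>b. b - i) ` B)))
      = desc_word ((\<lambda>c. Suc i + c - 1) ` (\<lambda>b. b - i) ` B)"
    using fin by (intro desc_word_image_strict_mono) (auto simp: strict_mono_def)
  moreover have "(\<lambda>c. Suc i + c - 1) ` (\<lambda>b. b - i) ` B = B"
    using B by (force simp: image_image)
  ultimately show ?thesis
    by (simp add: row_word_def)
qed

lemma reading_word_assemble:
  "reading_word (assemble i D A B) = concat (map (row_word D) [1..<i]) @ desc_word A
     @ map (\<lambda>c. i + c - 1) (rev [1..<start i D]) @ desc_word B @ row_word (frozen_part i D) (Suc i)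
     @ concat (map (row_word D) [Suc (Suc i)..<Suc (max (Suc i) (Max (insert 0 (fst ` D))))])"
proof -
  define R where "R = max (Suc i) (Max (insert 0 (fst ` D)))"
  let ?E = "assemble i D A B"
  have "Max (insert 0 (fst ` ?E)) \<le> R"
  proof (rule Max.boundedI)
    fix r assume "r \<in> insert 0 (fst ` ?E)"
    then have "r = 0 \<or> r = i \<or> r = Suc i \<or> r \<in> fst ` D"
      by (auto simp: assemble_def frozen_part_def)
    moreover have "r \<le> Max (insert 0 (fst ` D))" if "r \<in> fst ` D"
      using finite_pipe_dream that by (intro Max_ge) auto
    ultimately show "r \<le> R"
      by (auto simp: R_def le_max_iff_disj)
  qed (use pipe_dream_assemble in \<open>auto simp: pipe_dream_def\<close>)
  then have "reading_word ?E = concat (map (row_word ?E) [1..<Suc R])"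
    using pipe_dream_assemble by (intro reading_word_eq_rows) (simp_all add: pipe_dream_def)
  also have "[1..<Suc R] = [1..<i] @ i # Suc i # [Suc (Suc i)..<Suc R]"
  proof -
    have "Suc i \<le> R"
      by (simp add: R_def)
    then show ?thesis
      using i upt_add_eq_append[of 1 i "Suc R - i"] by (simp add: upt_conv_Cons)
  qed
  also have "map (row_word ?E) ([1..<i] @ i # Suc i # [Suc (Suc i)..<Suc R])
      = map (row_word D) [1..<i] @ row_word ?E i # row_word ?E (Suc i) # map (row_word D) [Suc (Suc i)..<Suc R]"
    by (auto simp: row_word_assemble_other)
  finally show ?thesis
    unfolding R_def by (simp only: row_word_assemble_upper row_word_assemble_lower concat_append
        map_append list.map concat.simps append_assoc)
qed

end

lemma demazure_assemble:
  obtains u \<Phi> where "\<And>A B. finite A \<Longrightarrow> finite B \<Longrightarrow> \<forall>a\<in>A. i + start i D \<le> a \<Longrightarrow>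
    \<forall>b\<in>B. i + start i D \<le> b \<Longrightarrow>
    demazure (assemble i D A B) = \<Phi> (hecke_word (desc_word B) (hecke_word (desc_word A) u))"
proof -
  define mid where "mid = map (\<lambda>c. i + c - 1) (rev [1..<start i D])"
  define rest where "rest = row_word (frozen_part i D) (Suc i)
    @ concat (map (row_word D) [Suc (Suc i)..<Suc (max (Suc i) (Max (insert 0 (fst ` D))))])"
  define u where "u = hecke_word (concat (map (row_word D) [1..<i])) id"
  have "demazure (assemble i D A B)
      = hecke_word (mid @ rest) (hecke_word (desc_word B) (hecke_word (desc_word A) u))"
    if adm: "finite A" "finite B" "\<forall>a\<in>A. i + start i D \<le> a" "\<forall>b\<in>B. i + start i D \<le> b" for A B
  proof -
    have "\<forall>a\<in>set mid. \<forall>b\<in>set (desc_word B). Suc (Suc a) \<le> b"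
      using adm by (auto simp: mid_def desc_word_def)
    then have "hecke_word (mid @ desc_word B) v = hecke_word (desc_word B @ mid) v" for v
      by (rule hecke_word_commute)
    moreover have "reading_word (assemble i D A B)
        = (concat (map (row_word D) [1..<i]) @ desc_word A) @ (mid @ desc_word B) @ rest"
      using reading_word_assemble[OF adm] by (simp add: mid_def rest_def)
    ultimately show ?thesis
      using demazure_eq_hecke_word[OF pipe_dream_assemble[OF adm]]
      by (simp only: hecke_word_append u_def)
  qed
  then show ?thesis
    by (rule that)
qed

end

end

section \<open>Classes of pipe dreams\<close>

lemma start_eq_if_frozen_part_eq:
  assumes "pipe_dream D" "pipe_dream E" "frozen_part i E = frozen_part i D"
  shows "start i E = start i D"
proof -
  have "{1..<start i E} = {c. (i, c) \<in> frozen_part i E}"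
    using row_frozen_part[OF assms(2), where i = i] by simp
  also have "\<dots> = {1..<start i D}"
    using row_frozen_part[OF assms(1), where i = i] assms(3) by simp
  finally have "card {1..<start i E} = card {1..<start i D}"
    by (rule arg_cong)
  then have "start i E - 1 = start i D - 1"
    by simp
  then show ?thesis
    using start_ge_1[of D i] start_ge_1[of E i] assms(1,2) by (simp add: pipe_dream_def)
qed

lemma mem_iff_if_frozen_part_eq:
  assumes "frozen_part i E = frozen_part i D" "start i E = start i D"
    and "(r \<noteq> i \<and> r \<noteq> Suc i) \<or> c < start i D"
  shows "(r, c) \<in> E \<longleftrightarrow> (r, c) \<in> D"
  using mem_frozen_part_iff[of r i c E] mem_frozen_part_iff[of r i c D] assms by simp

lemma PD_pipe_dream: "D \<in> PD w \<Longrightarrow> pipe_dream D"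
  by (simp add: PD_def)

definition top_letter :: "nat \<Rightarrow> (nat \<times> nat) set \<Rightarrow> nat" where
  "top_letter i D = Max (insert 0 (upper_letters i D \<union> lower_letters i D))"

lemma letters_le_top_letter:
  assumes "pipe_dream D" "x \<in> upper_letters i D \<union> lower_letters i D"
  shows "x \<le> top_letter i D"
  unfolding top_letter_def using assms finite_upper_letters finite_lower_letters by (intro Max_ge) auto

text \<open>Fixing the largest movable letter keeps the classes finite.\<close>
definition pd_class :: "nat \<Rightarrow> (nat \<Rightarrow> nat) \<Rightarrow> (nat \<times> nat) set \<Rightarrow> (nat \<times> nat) set set" where
  "pd_class i w D = {E \<in> PD w. frozen_part i E = frozen_part i D \<and> top_letter i E = top_letter i D}"

context
  fixes i :: nat and w :: "nat \<Rightarrow> nat" and D :: "(nat \<times> nat) set"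
  assumes D: "D \<in> PD w" and i: "1 \<le> i"
begin

definition class_pairs :: "(nat set \<times> nat set) set" where
  "class_pairs = {(A, B). A \<subseteq> {i + start i D..top_letter i D} \<and> B \<subseteq> {i + start i D..top_letter i D}
     \<and> Max (insert 0 (A \<union> B)) = top_letter i D \<and> demazure (assemble i D A B) = w}"

lemma class_pairs_admissible:
  assumes "(A, B) \<in> class_pairs"
  shows "finite A" "finite B" "\<forall>a\<in>A. i + start i D \<le> a" "\<forall>b\<in>B. i + start i D \<le> b"
proof -
  have "A \<subseteq> {i + start i D..top_letter i D}" "B \<subseteq> {i + start i D..top_letter i D}"
    using assms by (simp_all add: class_pairs_def)
  then show "finite A" "finite B" "\<forall>a\<in>A. i + start i D \<le> a" "\<forall>b\<in>B. i + start i D \<le> b"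
    by (auto intro: finite_subset)
qed

lemma assemble_eq_if_frozen_part_eq:
  "frozen_part i E = frozen_part i D \<Longrightarrow> assemble i E A B = assemble i D A B"
  by (simp add: assemble_def)

lemma letters_assemble_class_pairs:
  assumes "(A, B) \<in> class_pairs"
  shows "upper_letters i (assemble i D A B) = A" "lower_letters i (assemble i D A B) = B"
  using class_pairs_admissible[OF assms] PD_pipe_dream[OF D] i
  by (simp_all add: upper_letters_assemble lower_letters_assemble)

lemma assemble_mem_pd_class:
  assumes AB: "(A, B) \<in> class_pairs"
  shows "assemble i D A B \<in> pd_class i w D"
proof -
  note adm = class_pairs_admissible[OF AB]
  have "top_letter i (assemble i D A B) = top_letter i D"
    using AB unfolding top_letter_def letters_assemble_class_pairs[OF AB] class_pairs_def by simp
  then show ?thesis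
    using AB pipe_dream_assemble[OF PD_pipe_dream[OF D] i adm] frozen_part_assemble[OF PD_pipe_dream[OF D] i adm]
    unfolding pd_class_def PD_def class_pairs_def by simp
qed

lemma assemble_letters_pd_class:
  assumes "E \<in> pd_class i w D"
  shows "assemble i D (upper_letters i E) (lower_letters i E) = E"
proof -
  have pdE: "pipe_dream E" and frozen: "frozen_part i E = frozen_part i D"
    using assms by (simp_all add: pd_class_def PD_def)
  have "assemble i D (upper_letters i E) (lower_letters i E) = assemble i E (upper_letters i E) (lower_letters i E)"
    by (simp add: assemble_eq_if_frozen_part_eq[OF frozen])
  also have "\<dots> = E"
    by (rule assemble_upper_lower[OF pdE])
  finally show ?thesis .
qed

lemma letters_pd_class_mem_class_pairs:
  assumes E: "E \<in> pd_class i w D"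
  shows "(upper_letters i E, lower_letters i E) \<in> class_pairs"
proof -
  have pdE: "pipe_dream E" and frozen: "frozen_part i E = frozen_part i D"
    and top: "top_letter i E = top_letter i D" and "demazure E = w"
    using E by (simp_all add: pd_class_def PD_def)
  have start: "start i E = start i D"
    using start_eq_if_frozen_part_eq[OF PD_pipe_dream[OF D] pdE frozen] .
  have "upper_letters i E \<subseteq> {i + start i D..top_letter i D}"
    using upper_letters_ge[of _ i E] letters_le_top_letter[OF pdE, where i = i] unfolding start top by auto
  moreover have "lower_letters i E \<subseteq> {i + start i D..top_letter i D}"
    using lower_letters_ge[of _ i E] letters_le_top_letter[OF pdE, where i = i] unfolding start top by auto
  moreover have "demazure (assemble i D (upper_letters i E) (lower_letters i E)) = w"
    using assemble_letters_pd_class[OF E] \<open>demazure E = w\<close> by simp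
  moreover have "Max (insert 0 (upper_letters i E \<union> lower_letters i E)) = top_letter i D"
    using top by (simp only: top_letter_def)
  ultimately show ?thesis
    unfolding class_pairs_def by (simp only: mem_Collect_eq prod.case simp_thms)
qed

lemma bij_betw_class_pairs: "bij_betw (\<lambda>(A, B). assemble i D A B) class_pairs (pd_class i w D)"
  by (rule bij_betw_byWitness[where f' = "\<lambda>E. (upper_letters i E, lower_letters i E)"])
    (auto simp: letters_assemble_class_pairs assemble_mem_pd_class assemble_letters_pd_class
      letters_pd_class_mem_class_pairs)

lemma finite_pd_class: "finite (pd_class i w D)"
proof -
  have "class_pairs \<subseteq> Pow {i + start i D..top_letter i D} \<times> Pow {i + start i D..top_letter i D}"
    by (auto simp: class_pairs_def)
  then have "finite class_pairs"
    by (rule finite_subset) simp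
  then show ?thesis
    using bij_betw_finite[OF bij_betw_class_pairs] by simp
qed

lemma sum_pd_class_eq_sum_class_pairs:
  "(\<Sum>E\<in>pd_class i w D. h (lcount i i E) (lcount i (Suc i) E)) = (\<Sum>(A, B)\<in>class_pairs. h (card A) (card B))"
proof -
  have "(\<Sum>E\<in>pd_class i w D. h (lcount i i E) (lcount i (Suc i) E))
      = (\<Sum>p\<in>class_pairs. h (lcount i i ((\<lambda>(A, B). assemble i D A B) p))
          (lcount i (Suc i) ((\<lambda>(A, B). assemble i D A B) p)))"
    by (rule sum.reindex_bij_betw[OF bij_betw_class_pairs, symmetric])
  also have "\<dots> = (\<Sum>(A, B)\<in>class_pairs. h (card A) (card B))"
  proof (rule sum.cong[OF refl])
    fix p assume p: "p \<in> class_pairs"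
    obtain A B where AB: "p = (A, B)"
      by (cases p)
    note adm = class_pairs_admissible[OF p[unfolded AB]]
    show "h (lcount i i ((\<lambda>(A, B). assemble i D A B) p)) (lcount i (Suc i) ((\<lambda>(A, B). assemble i D A B) p))
        = (case p of (A, B) \<Rightarrow> h (card A) (card B))"
      unfolding AB prod.case
      lcount_eq_card_upper_letters[OF pipe_dream_assemble[OF PD_pipe_dream[OF D] i adm]]
      lcount_Suc_eq_card_lower_letters[OF pipe_dream_assemble[OF PD_pipe_dream[OF D] i adm]]
      upper_letters_assemble[OF PD_pipe_dream[OF D] i adm] lower_letters_assemble[OF PD_pipe_dream[OF D] i adm] ..
  qed
  finally show ?thesis .
qed

lemma sum_pd_class_symmetric:
  fixes x y :: real
  assumes "0 < x" "0 < y"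
  shows "(\<Sum>E\<in>pd_class i w D. x ^ lcount i i E * y ^ lcount i (Suc i) E)
    = (\<Sum>E\<in>pd_class i w D. x ^ lcount i (Suc i) E * y ^ lcount i i E)"
proof -
  obtain u \<Phi> where \<Phi>: "\<And>A B. finite A \<Longrightarrow> finite B \<Longrightarrow> \<forall>a\<in>A. i + start i D \<le> a \<Longrightarrow>
      \<forall>b\<in>B. i + start i D \<le> b \<Longrightarrow>
      demazure (assemble i D A B) = \<Phi> (hecke_word (desc_word B) (hecke_word (desc_word A) u))"
    by (rule demazure_assemble[OF PD_pipe_dream[OF D] i]) (rule that)
  let ?W = "{i + start i D..top_letter i D}"
  have "demazure (assemble i D A B) = \<Phi> (hecke_word (desc_word B) (hecke_word (desc_word A) u))"
    if "A \<subseteq> ?W" "B \<subseteq> ?W" for A B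
  proof (rule \<Phi>)
    show "finite A" "finite B"
      using finite_subset[OF that(1)] finite_subset[OF that(2)] by simp_all
  qed (use that in auto)
  then have "(A \<subseteq> ?W \<and> B \<subseteq> ?W \<and> Max (insert 0 (A \<union> B)) = top_letter i D
      \<and> demazure (assemble i D A B) = w) \<longleftrightarrow> (A \<subseteq> ?W \<and> B \<subseteq> ?W \<and> Max (insert 0 (A \<union> B)) = top_letter i D
      \<and> \<Phi> (hecke_word (desc_word B) (hecke_word (desc_word A) u)) = w)" for A B
    by (intro conj_cong refl) simp
  then have "class_pairs = {(A, B). A \<subseteq> ?W \<and> B \<subseteq> ?W \<and> Max (insert 0 (A \<union> B)) = top_letter i D
      \<and> \<Phi> (hecke_word (desc_word B) (hecke_word (desc_word A) u)) = w}"
    unfolding class_pairs_def by (simp only:)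
  moreover have "0 < i + start i D"
    using i by simp
  ultimately show ?thesis
    using sum_hecke_pairs_top_symmetric[where x = x and y = y and m = "i + start i D" and T = "top_letter i D"
        and P = "\<lambda>v. \<Phi> v = w" and u = u] assms
      sum_pd_class_eq_sum_class_pairs[of "\<lambda>a b. x ^ a * y ^ b"]
      sum_pd_class_eq_sum_class_pairs[of "\<lambda>a b. x ^ b * y ^ a"]
    by (simp add: mult.commute)
qed

end

lemma pd_class_involution:
  assumes "1 \<le> i"
  shows "\<exists>\<tau>. \<forall>D\<in>PD w. \<tau> D \<in> pd_class i w D \<and> \<tau> (\<tau> D) = D \<and> lcount i i (\<tau> D) = lcount i (Suc i) D"
proof (rule classwise_involution)
  fix D assume D: "D \<in> PD w"
  show "D \<in> pd_class i w D"
    using D by (simp add: pd_class_def)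
  show "pd_class i w E = pd_class i w D" if "E \<in> pd_class i w D" for E
    using that by (simp add: pd_class_def)
  note fin = finite_pd_class[OF D assms]
  show "\<exists>\<sigma>. \<forall>E\<in>pd_class i w D. \<sigma> E \<in> pd_class i w D \<and> \<sigma> (\<sigma> E) = E \<and> lcount i i (\<sigma> E) = lcount i (Suc i) E"
    by (rule involution_swapping[OF fin card_fibres_swap[OF fin sum_pd_class_symmetric[OF D assms]]])
qed

lemma pd_class_agrees:
  assumes D: "D \<in> PD w" and E: "E \<in> pd_class i w D"
  shows "E \<in> PD w" "start i E = start i D"
    and "(r \<noteq> i \<and> r \<noteq> Suc i) \<or> c < start i D \<Longrightarrow> (r, c) \<in> E \<longleftrightarrow> (r, c) \<in> D"
proof -
  show E_PD: "E \<in> PD w"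
    using E by (simp add: pd_class_def)
  have frozen: "frozen_part i E = frozen_part i D"
    using E by (simp add: pd_class_def)
  show start: "start i E = start i D"
    using start_eq_if_frozen_part_eq[OF PD_pipe_dream[OF D] PD_pipe_dream[OF E_PD] frozen] .
  show "(r, c) \<in> E \<longleftrightarrow> (r, c) \<in> D" if "(r \<noteq> i \<and> r \<noteq> Suc i) \<or> c < start i D"
    by (rule mem_iff_if_frozen_part_eq[OF frozen start that])
qed

theorem theorem3p1:
  fixes w :: "nat \<Rightarrow> nat" and i :: nat
  assumes "S_inf w" and "1 \<le> i"
  shows "\<exists>\<tau>. (\<forall>D \<in> PD w. \<tau> D \<in> PD w \<and> \<tau> (\<tau> D) = D
            \<and> (\<forall>r c. r \<noteq> i \<and> r \<noteq> i + 1 \<longrightarrow> ((r, c) \<in> \<tau> D \<longleftrightarrow> (r, c) \<in> D))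
            \<and> start i (\<tau> D) = start i D
            \<and> (\<forall>r c. c < start i D \<longrightarrow> ((r, c) \<in> \<tau> D \<longleftrightarrow> (r, c) \<in> D))
            \<and> lcount i i (\<tau> D) = lcount i (i + 1) D)"
proof -
  obtain \<tau> where \<tau>: "\<forall>D\<in>PD w. \<tau> D \<in> pd_class i w D \<and> \<tau> (\<tau> D) = D \<and> lcount i i (\<tau> D) = lcount i (Suc i) D"
    using pd_class_involution[OF assms(2)] ..
  have "\<tau> D \<in> PD w \<and> \<tau> (\<tau> D) = D
      \<and> (\<forall>r c. r \<noteq> i \<and> r \<noteq> i + 1 \<longrightarrow> ((r, c) \<in> \<tau> D \<longleftrightarrow> (r, c) \<in> D))
      \<and> start i (\<tau> D) = start i D
      \<and> (\<forall>r c. c < start i D \<longrightarrow> ((r, c) \<in> \<tau> D \<longleftrightarrow> (r, c) \<in> D))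
      \<and> lcount i i (\<tau> D) = lcount i (i + 1) D" if D: "D \<in> PD w" for D
  proof -
    have "\<tau> D \<in> pd_class i w D" "\<tau> (\<tau> D) = D" "lcount i i (\<tau> D) = lcount i (Suc i) D"
      using \<tau> D by simp_all
    then show ?thesis
      using pd_class_agrees[OF D] by simp
  qed
  then show ?thesis
    by blast
qed

end
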